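(* Let $\mathrm G^S=(\mathrm V,\mathrm E^S)$ be a fixed bidirectional connected graph with constant weights $a_{ij}^S=a_{ji}^S>0$, and suppose $\mathrm{rank}(\mathbf H)=m$. For $K>0$ let $\mathcal Z_K=\{\mathbf x\in(\mathbb R^m)^N:\nabla\mathcal D_K(\mathbf x)=0\}$. Then (i) $\mathcal Z_K$ is a singleton for every $K>0$ (so every trajectory of the "consensus + projection" flow on $\mathrm G^S$ converges to a single point); and (ii) for every $\kappa_0>0$ the set $\bigcup_{K>\kappa_0}\mathcal Z_K$ is bounded.
   Context: $\mathbf H\in\mathbb R^{N\times m}$ has rows $\mathbf h_1^T,\dots,\mathbf h_N^T$ with $\|\mathbf h_i\|=1$, $\mathbf z=(z_1,\dots,z_N)^T$; $\mathcal A_i=\{\mathbf y\in\mathbb R^m:\mathbf h_i^T\mathbf y=z_i\}$, $\|\mathbf v\|_{\mathcal A_i}$ the Euclidean distance from $\mathbf v$ to $\mathcal A_i$. $\mathrm V=\{1,\dots,N\}$; bidirectional means $(i,j)\in\mathrm E^S\iff(j,i)\in\mathrm E^S$; $\mathrm N_i=\{j:(j,i)\in\mathrm E^S\}$. $\mathcal D_K(\mathbf x)=\frac12\sum_{i=1}^N\|\mathbf x_i\|_{\mathcal A_i}^2+\frac K2\sum_{\{i,j\}\in\mathrm E^S}a_{ij}^S\|\mathbf x_j-\mathbf x_i\|^2$, the second sum over unordered edges; the "consensus + projection" flow $\dot{\mathbf x}_i=K\sum_{j\in\mathrm N_i}a_{ij}^S(\mathbf x_j-\mathbf x_i)+\mathcal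 P_{\mathcal A_i}(\mathbf x_i)-\mathbf x_i$ equals $\dot{\mathbf x}=-\nabla\mathcal D_K(\mathbf x)$, where $\mathcal P_{\mathcal A_i}(\mathbf y)=(I-\mathbf h_i\mathbf h_i^T)\mathbf y+z_i\mathbf h_i$. *)

theory Defs
  imports "HOL-Analysis.Analysis"
begin

text \<open>Agents are indexed by a finite type 'n (V = UNIV, N = CARD('n));
  the ambient space R^m is real^'m (m = CARD('m)).
  A state x in (R^m)^N is an element of real^'m^'n, x $ i being agent i's estimate.\<close>

definition hyperplane :: "(real^'m) \<Rightarrow> real \<Rightarrow> (real^'m) set" where
  "hyperplane hi zi = {y. hi \<bullet> y = zi}"

text \<open>The sum over unordered edges {i,j} of the symmetric edge set E is written as
  one half of the sum over ordered pairs (i,j) in E (each unordered edge appears twice,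
  a self-loop would contribute 0 either way).\<close>
definition DK :: "real \<Rightarrow> ('n::finite \<Rightarrow> 'n \<Rightarrow> real) \<Rightarrow> ('n \<times> 'n) set
    \<Rightarrow> ('n \<Rightarrow> real^'m) \<Rightarrow> ('n \<Rightarrow> real) \<Rightarrow> real^'m^'n \<Rightarrow> real" where
  "DK K a E h z x =
     (1/2) * (\<Sum>i\<in>UNIV. (infdist (x $ i) (hyperplane (h i) (z i)))\<^sup>2)
     + (K/2) * ((1/2) * (\<Sum>(i,j)\<in>E. a i j * (norm (x $ j - x $ i))\<^sup>2))"

definition ZK :: "real \<Rightarrow> ('n::finite \<Rightarrow> 'n \<Rightarrow> real) \<Rightarrow> ('n \<times> 'n) set
    \<Rightarrow> ('n \<Rightarrow> real^'m) \<Rightarrow> ('n \<Rightarrow> real) \<Rightarrow> (real^'m^'n) set" where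
  "ZK K a E h z = {x. (DK K a E h z has_derivative (\<lambda>_. 0)) (at x)}"

end

theory Submission
  imports Defs
begin

text \<open>For unit normals h_i, D_K is the quadratic function
  x \<mapsto> 1/2 sum_i (h_i \<bullet> x_i - z_i)^2 + K/4 sum_{(i,j) in E} a_ij |x_j - x_i|^2.
  Its Hessian form vanishes only if all x_i agree (connectivity) and the common value is
  orthogonal to every h_i, hence zero (full rank). So D_K is strongly convex: its critical
  points are exactly its global minimisers, and there is exactly one. For (ii), a critical
  point x of D_K with K > \<kappa>0 satisfies D_\<kappa>0(x) \<le> D_K(x) \<le> D_K(0) = D_\<kappa>0(0), and this sublevel
  set of D_\<kappa>0 is bounded by strong convexity.\<close>

lemma infdist_hyperplane:
  fixes n :: "real^'m"
  assumes "norm n = 1"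
  shows "infdist p (hyperplane n c) = \<bar>n \<bullet> p - c\<bar>"
proof (rule antisym)
  let ?q = "p - (n \<bullet> p - c) *\<^sub>R n"
  have "n \<bullet> n = 1" using assms by (simp add: power2_norm_eq_inner[symmetric])
  then have q: "?q \<in> hyperplane n c" by (simp add: hyperplane_def inner_diff_right)
  then have "infdist p (hyperplane n c) \<le> dist p ?q" by (rule infdist_le)
  also have "\<dots> = \<bar>n \<bullet> p - c\<bar>" using assms by (simp add: dist_norm)
  finally show "infdist p (hyperplane n c) \<le> \<bar>n \<bullet> p - c\<bar>" .
  have ne: "hyperplane n c \<noteq> {}" using q by auto
  show "\<bar>n \<bullet> p - c\<bar> \<le> infdist p (hyperplane n c)"
    unfolding infdist_notempty[OF ne]
  proof (rule cINF_greatest[OF ne])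
    fix y assume "y \<in> hyperplane n c"
    then have "n \<bullet> p - c = n \<bullet> (p - y)" by (simp add: hyperplane_def inner_diff_right)
    also have "\<bar>\<dots>\<bar> \<le> norm n * norm (p - y)" by (rule Cauchy_Schwarz_ineq2)
    finally show "\<bar>n \<bullet> p - c\<bar> \<le> dist p y" using assms by (simp add: dist_norm)
  qed
qed

lemma positive_definite_quadratic_coercive:
  fixes q :: "'a::euclidean_space \<Rightarrow> real"
  assumes cont: "continuous_on UNIV q"
    and homogeneous: "\<And>c v. q (c *\<^sub>R v) = c\<^sup>2 * q v"
    and pos: "\<And>v. v \<noteq> 0 \<Longrightarrow> q v > 0"
  shows "\<exists>\<mu>>0. \<forall>v. \<mu> * (norm v)\<^sup>2 \<le> q v"
proof -
  obtain u :: 'a where "norm u = 1" using vector_choose_size[of 1] by auto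
  then have "sphere (0::'a) 1 \<noteq> {}" by auto
  then obtain v0 where "v0 \<in> sphere 0 1" and min: "\<forall>v\<in>sphere 0 1. q v0 \<le> q v"
    using continuous_attains_inf[OF compact_sphere _ continuous_on_subset[OF cont subset_UNIV]]
    by blast
  have "q v0 * (norm v)\<^sup>2 \<le> q v" for v
  proof (cases "v = 0")
    case True
    then show ?thesis using homogeneous[of 0 v] by simp
  next
    case False
    then have "v = norm v *\<^sub>R (inverse (norm v) *\<^sub>R v)" by simp
    then have "q v = (norm v)\<^sup>2 * q (inverse (norm v) *\<^sub>R v)" by (metis homogeneous)
    moreover have "q v0 \<le> q (inverse (norm v) *\<^sub>R v)" using False min by simp
    ultimately show ?thesis by (metis mult.commute mult_right_mono zero_le_power2)
  qed
  moreover have "q v0 > 0" using \<open>v0 \<in> sphere 0 1\<close> by (intro pos) auto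
  ultimately show ?thesis by blast
qed

lemma critical_point_global_min:
  fixes f :: "'a::real_vector \<Rightarrow> real"
  assumes expansion: "\<And>x v. f (x + v) = f x + f' x v + q v"
    and q_nonneg: "\<And>v. q v \<ge> 0" and "f' x = (\<lambda>_. 0)"
  shows "f x \<le> f y"
  using expansion[of x "y - x"] q_nonneg[of "y - x"] \<open>f' x = (\<lambda>_. 0)\<close> by simp

lemma critical_point_unique:
  fixes f :: "'a::real_vector \<Rightarrow> real"
  assumes expansion: "\<And>x v. f (x + v) = f x + f' x v + q v"
    and q_nonneg: "\<And>v. q v \<ge> 0" and q_definite: "\<And>v. q v = 0 \<Longrightarrow> v = 0"
    and "f' x = (\<lambda>_. 0)" "f' y = (\<lambda>_. 0)"
  shows "x = y"
proof -
  have "f y = f x + q (y - x)" "f x = f y + q (x - y)"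
    using expansion[of x "y - x"] expansion[of y "x - y"] assms(4,5) by simp_all
  then have "q (y - x) = 0" using q_nonneg[of "x - y"] q_nonneg[of "y - x"] by linarith
  from q_definite[OF this] show ?thesis by simp
qed

lemma quadratic_growth_sublevel_bounded:
  fixes f :: "'a::real_normed_vector \<Rightarrow> real"
  assumes expansion: "\<And>v. f v = f 0 + l v + q v" and "bounded_linear l"
    and "\<mu> > 0" and growth: "\<And>v. \<mu> * (norm v)\<^sup>2 \<le> q v"
  shows "\<exists>R. \<forall>x. f x \<le> f 0 \<longrightarrow> norm x \<le> R"
proof -
  obtain B where "B > 0" and B: "\<And>v. norm (l v) \<le> norm v * B"
    using bounded_linear.pos_bounded[OF \<open>bounded_linear l\<close>] by blast
  have "norm x \<le> B / \<mu>" if "f x \<le> f 0" for x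
  proof -
    have "\<mu> * (norm x)\<^sup>2 \<le> norm x * B"
      using that expansion[of x] growth[of x] B[of x] by (auto simp: abs_le_iff)
    then have "norm x * (\<mu> * norm x) \<le> norm x * B" by (simp add: power2_eq_square ac_simps)
    then have "\<mu> * norm x \<le> B" if "x \<noteq> 0" using that by simp
    then show ?thesis using \<open>\<mu> > 0\<close> \<open>B > 0\<close>
      by (cases "x = 0") (simp_all add: pos_le_divide_eq mult.commute)
  qed
  then show ?thesis by blast
qed

lemma exists_global_min_of_bounded_sublevel:
  fixes f :: "'a::{real_normed_vector, heine_borel} \<Rightarrow> real"
  assumes "continuous_on UNIV f" and sublevel: "\<And>x. f x \<le> f 0 \<Longrightarrow> norm x \<le> R"
  shows "\<exists>x. \<forall>y. f x \<le> f y"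
proof -
  have "0 \<in> cball (0::'a) R" using sublevel[of 0] by simp
  then obtain x where min: "\<And>y. y \<in> cball 0 R \<Longrightarrow> f x \<le> f y"
    using continuous_attains_inf[OF compact_cball _ continuous_on_subset[OF assms(1)]]
    by (metis empty_iff subset_UNIV)
  have "f x \<le> f y" for y
  proof (cases "y \<in> cball 0 R")
    case False
    then have "f 0 < f y" using sublevel[of y] by force
    then show ?thesis using min[OF \<open>0 \<in> cball 0 R\<close>] by linarith
  qed (rule min)
  then show ?thesis by blast
qed

lemma weighted_edge_sum_nonneg:
  fixes f :: "'n \<Rightarrow> 'a::real_inner"
  assumes "\<And>i j. (i, j) \<in> E \<Longrightarrow> a i j \<ge> 0"
  shows "0 \<le> (\<Sum>(i,j)\<in>E. a i j * ((f j - f i) \<bullet> (f j - f i)))"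
  using assms by (auto intro!: sum_nonneg mult_nonneg_nonneg)

lemma weighted_edge_sum_eq_0_imp_eq:
  fixes f :: "'n \<Rightarrow> 'a::real_inner"
  assumes "finite E" and pos: "\<And>i j. (i, j) \<in> E \<Longrightarrow> a i j > 0"
    and sum0: "(\<Sum>(i,j)\<in>E. a i j * ((f j - f i) \<bullet> (f j - f i))) = 0"
    and "(i, j) \<in> E\<^sup>*"
  shows "f i = f j"
  using \<open>(i, j) \<in> E\<^sup>*\<close>
proof (induction rule: rtrancl_induct)
  case (step k l)
  have "\<forall>p\<in>E. 0 \<le> (\<lambda>(i, j). a i j * ((f j - f i) \<bullet> (f j - f i))) p"
    using pos by (force intro: mult_nonneg_nonneg less_imp_le)
  with sum0 have "\<forall>p\<in>E. (\<lambda>(i, j). a i j * ((f j - f i) \<bullet> (f j - f i))) p = 0"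
    by (simp add: sum_nonneg_eq_0_iff[OF \<open>finite E\<close>])
  then have "a k l * ((f l - f k) \<bullet> (f l - f k)) = 0" using \<open>(k, l) \<in> E\<close> by fastforce
  then have "f k = f l" using pos[OF \<open>(k, l) \<in> E\<close>] by simp
  with step.IH show ?case by simp
qed simp

lemma full_rank_orthogonal_rows_imp_zero:
  fixes h :: "'n::finite \<Rightarrow> real^'m"
  assumes "rank ((\<chi> i. h i) :: real^'m^'n) = CARD('m)" and "\<And>i. h i \<bullet> w = 0"
  shows "w = 0"
proof -
  have "((\<chi> i. h i) :: real^'m^'n) *v w = (\<chi> i. h i) *v 0"
    using assms(2) by (simp add: vec_eq_iff matrix_vector_mult_def inner_vec_def)
  then show ?thesis using assms(1)[unfolded full_rank_injective] by (metis injD)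
qed

definition consensus_energy :: "real \<Rightarrow> ('n::finite \<Rightarrow> 'n \<Rightarrow> real) \<Rightarrow> ('n \<times> 'n) set
    \<Rightarrow> ('n \<Rightarrow> real^'m) \<Rightarrow> ('n \<Rightarrow> real) \<Rightarrow> real^'m^'n \<Rightarrow> real" where
  "consensus_energy K a E h z x = 1 / 2 * (\<Sum>i\<in>UNIV. (h i \<bullet> x $ i - z i)\<^sup>2)
     + K / 4 * (\<Sum>(i,j)\<in>E. a i j * ((x $ j - x $ i) \<bullet> (x $ j - x $ i)))"

definition consensus_energy_deriv :: "real \<Rightarrow> ('n::finite \<Rightarrow> 'n \<Rightarrow> real) \<Rightarrow> ('n \<times> 'n) set
    \<Rightarrow> ('n \<Rightarrow> real^'m) \<Rightarrow> ('n \<Rightarrow> real) \<Rightarrow> real^'m^'n \<Rightarrow> real^'m^'n \<Rightarrow> real" where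
  "consensus_energy_deriv K a E h z x v = (\<Sum>i\<in>UNIV. (h i \<bullet> x $ i - z i) * (h i \<bullet> v $ i))
     + K / 2 * (\<Sum>(i,j)\<in>E. a i j * ((x $ j - x $ i) \<bullet> (v $ j - v $ i)))"

lemma DK_eq_consensus_energy:
  assumes "\<And>i. norm (h i) = 1"
  shows "DK K a E h z = consensus_energy K a E h z"
  by (rule ext) (simp add: DK_def consensus_energy_def infdist_hyperplane[OF assms] power2_norm_eq_inner)

lemma consensus_energy_has_derivative:
  "(consensus_energy K a E h z has_derivative consensus_energy_deriv K a E h z x) (at x)"
  unfolding consensus_energy_def[abs_def] consensus_energy_deriv_def[abs_def] case_prod_beta
  apply (rule has_derivative_eq_rhs)
   apply ((rule derivative_intros bounded_linear_imp_has_derivative[OF bounded_linear_vec_nth])+)[1]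
  apply (rule ext)
  apply (simp add: sum_distrib_left inner_diff_left inner_diff_right inner_commute algebra_simps sum.distrib)
  done

lemma continuous_on_consensus_energy: "continuous_on S (consensus_energy K a E h z)"
  by (intro continuous_at_imp_continuous_on ballI
      has_derivative_continuous[OF consensus_energy_has_derivative])

text \<open>The Hessian form of the energy is the energy with zero data.\<close>
lemma consensus_energy_expansion:
  "consensus_energy K a E h z (x + v) =
     consensus_energy K a E h z x + consensus_energy_deriv K a E h z x v + consensus_energy K a E h (\<lambda>_. 0) v"
proof -
  have data: "(h i \<bullet> (x + v) $ i - z i)\<^sup>2 =
      (h i \<bullet> x $ i - z i)\<^sup>2 + 2 * ((h i \<bullet> x $ i - z i) * (h i \<bullet> v $ i)) + (h i \<bullet> v $ i)\<^sup>2" for i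
    by (simp add: inner_add_right power2_eq_square algebra_simps)
  have edge: "a i j * (((x + v) $ j - (x + v) $ i) \<bullet> ((x + v) $ j - (x + v) $ i)) =
      a i j * ((x $ j - x $ i) \<bullet> (x $ j - x $ i)) + 2 * (a i j * ((x $ j - x $ i) \<bullet> (v $ j - v $ i)))
      + a i j * ((v $ j - v $ i) \<bullet> (v $ j - v $ i))" for i j
    by (simp add: inner_add_right inner_add_left inner_diff_left inner_diff_right inner_commute algebra_simps)
  show ?thesis
    unfolding consensus_energy_def consensus_energy_deriv_def data case_prod_beta edge
      sum.distrib sum_distrib_left[symmetric]
    by (simp add: algebra_simps)
qed

lemma consensus_energy_zero_data_scaleR:
  "consensus_energy K a E h (\<lambda>_. 0) (c *\<^sub>R v) = c\<^sup>2 * consensus_energy K a E h (\<lambda>_. 0) v"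
proof -
  have data: "(h i \<bullet> (c *\<^sub>R v) $ i - 0)\<^sup>2 = c\<^sup>2 * (h i \<bullet> v $ i - 0)\<^sup>2" for i
    by (simp add: power_mult_distrib)
  have edge: "a i j * (((c *\<^sub>R v) $ j - (c *\<^sub>R v) $ i) \<bullet> ((c *\<^sub>R v) $ j - (c *\<^sub>R v) $ i))
      = c\<^sup>2 * (a i j * ((v $ j - v $ i) \<bullet> (v $ j - v $ i)))" for i j
    by (simp add: scaleR_diff_right[symmetric] power2_eq_square)
  show ?thesis
    unfolding consensus_energy_def case_prod_beta data edge sum_distrib_left[symmetric]
    by (simp add: algebra_simps)
qed

lemma consensus_energy_nonneg:
  assumes "\<And>i j. (i, j) \<in> E \<Longrightarrow> a i j \<ge> 0" and "K \<ge> 0"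
  shows "0 \<le> consensus_energy K a E h z x"
proof -
  have "0 \<le> (\<Sum>(i,j)\<in>E. a i j * ((x $ j - x $ i) \<bullet> (x $ j - x $ i)))"
    by (rule weighted_edge_sum_nonneg) (rule assms(1))
  with assms(2) show ?thesis
    unfolding consensus_energy_def by (auto intro!: add_nonneg_nonneg mult_nonneg_nonneg sum_nonneg)
qed

lemma consensus_energy_mono:
  assumes "\<And>i j. (i, j) \<in> E \<Longrightarrow> a i j \<ge> 0" and "K \<le> K'"
  shows "consensus_energy K a E h z x \<le> consensus_energy K' a E h z x"
proof -
  have "0 \<le> (\<Sum>(i,j)\<in>E. a i j * ((x $ j - x $ i) \<bullet> (x $ j - x $ i)))"
    by (rule weighted_edge_sum_nonneg) (rule assms(1))
  with assms(2) show ?thesis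
    unfolding consensus_energy_def by (intro add_left_mono mult_right_mono) auto
qed

lemma consensus_energy_zero_data_pos:
  fixes h :: "'n::finite \<Rightarrow> real^'m"
  assumes pos: "\<And>i j. (i, j) \<in> E \<Longrightarrow> a i j > 0" and "K > 0"
    and conn: "\<And>i j. (i, j) \<in> E\<^sup>*"
    and rank: "rank ((\<chi> i. h i) :: real^'m^'n) = CARD('m)"
    and "v \<noteq> 0"
  shows "0 < consensus_energy K a E h (\<lambda>_. 0) v"
proof (rule ccontr)
  define data where "data = (\<Sum>i\<in>UNIV. (h i \<bullet> v $ i)\<^sup>2)"
  define edges where "edges = (\<Sum>(i,j)\<in>E. a i j * ((v $ j - v $ i) \<bullet> (v $ j - v $ i)))"
  assume "\<not> 0 < consensus_energy K a E h (\<lambda>_. 0) v"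
  then have "1 / 2 * data + K / 4 * edges \<le> 0"
    by (simp add: consensus_energy_def data_def edges_def)
  moreover have "0 \<le> data" unfolding data_def by (auto intro: sum_nonneg)
  moreover have "0 \<le> edges"
    unfolding edges_def using pos by (intro weighted_edge_sum_nonneg less_imp_le)
  moreover have "0 \<le> K / 4 * edges" using \<open>K > 0\<close> calculation(3) by simp
  ultimately have "data = 0" "K / 4 * edges = 0" by linarith+
  then have "\<And>i. h i \<bullet> v $ i = 0" and "\<And>i j. v $ i = v $ j"
    using \<open>K > 0\<close> weighted_edge_sum_eq_0_imp_eq[OF finite pos _ conn]
    by (simp_all add: data_def edges_def sum_nonneg_eq_0_iff)
  then have "h i \<bullet> v $ k = 0" for i k by metis
  then have "v $ k = 0" for k by (rule full_rank_orthogonal_rows_imp_zero[OF rank])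
  with \<open>v \<noteq> 0\<close> show False by (simp add: vec_eq_iff)
qed

lemma consensus_energy_coercive:
  fixes h :: "'n::finite \<Rightarrow> real^'m"
  assumes "\<And>i j. (i, j) \<in> E \<Longrightarrow> a i j > 0" and "K > 0"
    and "\<And>i j. (i, j) \<in> E\<^sup>*"
    and "rank ((\<chi> i. h i) :: real^'m^'n) = CARD('m)"
  shows "\<exists>\<mu>>0. \<forall>v. \<mu> * (norm v)\<^sup>2 \<le> consensus_energy K a E h (\<lambda>_. 0) v"
  using continuous_on_consensus_energy consensus_energy_zero_data_scaleR
    consensus_energy_zero_data_pos[where a = a, OF assms]
  by (rule positive_definite_quadratic_coercive[where q = "consensus_energy K a E h (\<lambda>_. 0)"])

lemma consensus_energy_sublevel_bounded:
  fixes h :: "'n::finite \<Rightarrow> real^'m"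
  assumes "\<And>i j. (i, j) \<in> E \<Longrightarrow> a i j > 0" and "K > 0"
    and "\<And>i j. (i, j) \<in> E\<^sup>*"
    and "rank ((\<chi> i. h i) :: real^'m^'n) = CARD('m)"
  shows "\<exists>R. \<forall>x. consensus_energy K a E h z x \<le> consensus_energy K a E h z 0 \<longrightarrow> norm x \<le> R"
proof -
  obtain \<mu> where "\<mu> > 0" "\<And>v. \<mu> * (norm v)\<^sup>2 \<le> consensus_energy K a E h (\<lambda>_. 0) v"
    using consensus_energy_coercive[where a = a, OF assms] by blast
  moreover have "consensus_energy K a E h z v =
      consensus_energy K a E h z 0 + consensus_energy_deriv K a E h z 0 v
      + consensus_energy K a E h (\<lambda>_. 0) v" for v
    using consensus_energy_expansion[of K a E h z 0 v] by simp
  ultimately show ?thesis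
    using has_derivative_bounded_linear[OF consensus_energy_has_derivative]
    by (intro quadratic_growth_sublevel_bounded[where q = "consensus_energy K a E h (\<lambda>_. 0)"])
qed

lemma ZK_iff_consensus_energy_deriv_eq_0:
  assumes "\<And>i. norm (h i) = 1"
  shows "x \<in> ZK K a E h z \<longleftrightarrow> consensus_energy_deriv K a E h z x = (\<lambda>_. 0)"
  unfolding ZK_def DK_eq_consensus_energy[OF assms] mem_Collect_eq
proof
  assume "(consensus_energy K a E h z has_derivative (\<lambda>_. 0)) (at x)"
  then show "consensus_energy_deriv K a E h z x = (\<lambda>_. 0)"
    by (rule has_derivative_unique[OF consensus_energy_has_derivative])
qed (metis consensus_energy_has_derivative)

lemma consensus_energy_unique_critical_point:
  fixes h :: "'n::finite \<Rightarrow> real^'m"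
  assumes pos: "\<And>i j. (i, j) \<in> E \<Longrightarrow> a i j > 0" and "K > 0"
    and conn: "\<And>i j. (i, j) \<in> E\<^sup>*"
    and rank: "rank ((\<chi> i. h i) :: real^'m^'n) = CARD('m)"
  shows "\<exists>!x. consensus_energy_deriv K a E h z x = (\<lambda>_. 0)"
proof -
  let ?f = "consensus_energy K a E h z" and ?f' = "consensus_energy_deriv K a E h z"
  let ?q = "consensus_energy K a E h (\<lambda>_. 0)"
  obtain R where "\<And>x. ?f x \<le> ?f 0 \<Longrightarrow> norm x \<le> R"
    using consensus_energy_sublevel_bounded[where a = a, OF assms] by blast
  then obtain x where "\<forall>y. ?f x \<le> ?f y"
    using exists_global_min_of_bounded_sublevel[OF continuous_on_consensus_energy] by blast
  then have "?f' x = (\<lambda>_. 0)"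
    by (intro has_derivative_local_min[OF consensus_energy_has_derivative] always_eventually) blast
  moreover have "0 \<le> ?q v" for v
    using pos \<open>K > 0\<close> by (intro consensus_energy_nonneg) (simp_all add: less_imp_le)
  moreover have "v = 0" if "?q v = 0" for v
    using consensus_energy_zero_data_pos[where a = a, OF assms, of v] that by auto
  ultimately show ?thesis
    using critical_point_unique[where f = ?f and f' = ?f' and q = ?q, OF consensus_energy_expansion]
    by blast
qed

lemma consensus_energy_critical_points_bounded:
  fixes h :: "'n::finite \<Rightarrow> real^'m"
  assumes pos: "\<And>i j. (i, j) \<in> E \<Longrightarrow> a i j > 0" and "\<kappa>0 > 0"
    and conn: "\<And>i j. (i, j) \<in> E\<^sup>*"
    and rank: "rank ((\<chi> i. h i) :: real^'m^'n) = CARD('m)"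
  shows "\<exists>R. \<forall>K>\<kappa>0. \<forall>x. consensus_energy_deriv K a E h z x = (\<lambda>_. 0) \<longrightarrow> norm x \<le> R"
proof -
  let ?f = "\<lambda>K. consensus_energy K a E h z"
  have nonneg: "\<And>i j. (i, j) \<in> E \<Longrightarrow> a i j \<ge> 0" using pos by (simp add: less_imp_le)
  obtain R where R: "\<And>x. ?f \<kappa>0 x \<le> ?f \<kappa>0 0 \<Longrightarrow> norm x \<le> R"
    using consensus_energy_sublevel_bounded[where a = a, OF assms] by blast
  have "norm x \<le> R" if "K > \<kappa>0" and "consensus_energy_deriv K a E h z x = (\<lambda>_. 0)" for K x
  proof (rule R)
    have "?f \<kappa>0 x \<le> ?f K x" using \<open>K > \<kappa>0\<close> by (intro consensus_energy_mono nonneg) simp_all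
    also have "\<dots> \<le> ?f K 0"
    proof (rule critical_point_global_min[OF consensus_energy_expansion _ that(2)])
      show "0 \<le> consensus_energy K a E h (\<lambda>_. 0) v" for v
        using \<open>K > \<kappa>0\<close> \<open>\<kappa>0 > 0\<close> by (intro consensus_energy_nonneg nonneg) simp_all
    qed
    also have "\<dots> = ?f \<kappa>0 0" by (simp add: consensus_energy_def)
    finally show "?f \<kappa>0 x \<le> ?f \<kappa>0 0" .
  qed
  then show ?thesis by blast
qed

theorem mainTheorem12:
  fixes E :: "('n::finite \<times> 'n) set"
    and a :: "'n \<Rightarrow> 'n \<Rightarrow> real"
    and h :: "'n \<Rightarrow> real^'m"
    and z :: "'n \<Rightarrow> real"
  assumes bidir: "\<And>i j. (i, j) \<in> E \<longleftrightarrow> (j, i) \<in> E"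
    and connected: "\<And>i j. (i, j) \<in> E\<^sup>*"
    and weights_sym: "\<And>i j. (i, j) \<in> E \<Longrightarrow> a i j = a j i"
    and weights_pos: "\<And>i j. (i, j) \<in> E \<Longrightarrow> a i j > 0"
    and unit_rows: "\<And>i. norm (h i) = 1"
    and full_rank: "rank ((\<chi> i. h i) :: real^'m^'n) = CARD('m)"
  shows "(\<forall>K>0. \<exists>!x. x \<in> ZK K a E h z)
       \<and> (\<forall>\<kappa>0>0. bounded (\<Union>K\<in>{\<kappa>0<..}. ZK K a E h z))"
proof -
  note critical = ZK_iff_consensus_energy_deriv_eq_0[OF unit_rows]
  have "\<exists>!x. x \<in> ZK K a E h z" if "K > 0" for K
    unfolding critical
    by (rule consensus_energy_unique_critical_point[where a = a, OF weights_pos that connected full_rank])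
  moreover have "bounded (\<Union>K\<in>{\<kappa>0<..}. ZK K a E h z)" if "\<kappa>0 > 0" for \<kappa>0
  proof -
    obtain R where "\<forall>K>\<kappa>0. \<forall>x. consensus_energy_deriv K a E h z x = (\<lambda>_. 0) \<longrightarrow> norm x \<le> R"
      using consensus_energy_critical_points_bounded[where a = a, OF weights_pos \<open>\<kappa>0 > 0\<close> connected full_rank]
      by blast
    then show ?thesis unfolding bounded_iff by (intro exI[of _ R]) (auto simp: critical)
  qed
  ultimately show ?thesis by blast
qed

end
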